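(* Let $X_1,\dots,X_k$ be normal terms, let $f\in\Sigma_E$ have arity $k$, and let $\Pi$ be a cut-free derivation in $\mathcal S$ of $\Gamma,\downarrow f(X_1,\dots,X_k)\vdash M$. Then there exists a cut-free derivation $\Pi'$ in $\mathcal S$ of $\Gamma,X_1,\dots,X_k\vdash M$.
   Context: Fix names, variables and constructors $\mathsf{pub}$ (unary), $\mathsf{sign},\mathsf{blind},\langle\cdot,\cdot\rangle,\{\cdot\}_\cdot$ (binary). $E$ is the union of AC-convergent equational theories $E_1,\dots,E_n$ with pairwise disjoint signatures, disjoint from the constructors, each with at most one associative-commutative (AC) binary symbol $\oplus_i$; $E$ is presented by a rewrite system $R_E$ terminating and confluent modulo AC; $\Sigma_E$ is its signature. Terms are ground terms over names, the constructors and $\Sigma_E$; $\downarrow N$ is the $R_E$-normal form of $N$ modulo AC, and normal terms are those in normal form. $\equiv$ is equality modulo AC of all $\oplus_i$; $\approx_E$ equality modulo $E$. Guarded term: a name, a variable, or headed by a constructor. $E$-context: term with holes built only from symbols of $\Sigma_E$. Sequents $\Gamma\vdash M$ have all terms in normal form; $\Gamma,M$ means $\Gamma\cup\{M\}$. A derivation is cut-free if it has no instance of (cut). System $\mathcal S$: (id) $\Gamma\vdash M$ with no premise if $M\approx_E C[M_1,\dots,M_k]$ for an $E$-context $C$ and $M_i\in\Gamma$; (cut) from $\Gamma\vdash M$, $\Gamma,M\vdash T$ infer $\Gamma\vdash T$; ($p_L$) from $\Gamma,\langle M,N\rangle,M,N\vdash T$ infer $\Gamma,\langle M,N\rangle\vdash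 T$; ($p_R$) from $\Gamma\vdash M,\Gamma\vdash N$ infer $\Gamma\vdash\langle M,N\rangle$; ($e_L$) from $\Gamma,\{M\}_K\vdash K$ and $\Gamma,\{M\}_K,M,K\vdash N$ infer $\Gamma,\{M\}_K\vdash N$; ($e_R$) from $\Gamma\vdash M,\Gamma\vdash K$ infer $\Gamma\vdash\{M\}_K$; ($\mathsf{sign}_L$) from $\Gamma,\mathsf{sign}(M,K),\mathsf{pub}(L),M\vdash N$ infer $\Gamma,\mathsf{sign}(M,K),\mathsf{pub}(L)\vdash N$ if $K\equiv L$; ($\mathsf{sign}_R$) from $\Gamma\vdash M,\Gamma\vdash K$ infer $\Gamma\vdash\mathsf{sign}(M,K)$; ($\mathsf{blind}_{L1}$) from $\Gamma,\mathsf{blind}(M,K)\vdash K$ and $\Gamma,\mathsf{blind}(M,K),M,K\vdash N$ infer $\Gamma,\mathsf{blind}(M,K)\vdash N$; ($\mathsf{blind}_R$) from $\Gamma\vdash M,\Gamma\vdash K$ infer $\Gamma\vdash\mathsf{blind}(M,K)$; ($\mathsf{blind}_{L2}$) from $\Gamma,\mathsf{sign}(\mathsf{blind}(M,R),K)\vdash R$ and $\Gamma,\mathsf{sign}(\mathsf{blind}(M,R),K),\mathsf{sign}(M,K),R\vdash N$ infer $\Gamma,\mathsf{sign}(\mathsf{blind}(M,R),K)\vdash N$; ($gs$) from $\Gamma\vdash A$, $\Gamma,A\vdash M$ infer $\Gamma\vdash M$ if $A$ is a guarded subterm of a term in $\Gamma\cup\{M\}$. *)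

theory Defs
  imports Main
begin

text \<open>Terms over names (type 'n), variables (used only in rewrite rules and E-contexts),
  the constructors pub, sign, blind, pairing and encryption, and the symbols of
  Sigma_E (type 'f; every element of 'f is a symbol of Sigma_E).\<close>

datatype ('n, 'f) trm =
    Nm 'n
  | V nat
  | Pub "('n, 'f) trm"
  | Sign "('n, 'f) trm" "('n, 'f) trm"
  | Blind "('n, 'f) trm" "('n, 'f) trm"
  | Pr "('n, 'f) trm" "('n, 'f) trm"
  | Enc "('n, 'f) trm" "('n, 'f) trm"     (* Enc M K = {M}_K *)
  | Fn 'f "('n, 'f) trm list"

primrec vars :: "('n, 'f) trm \<Rightarrow> nat set" where
  "vars (Nm a) = {}"
| "vars (V x) = {x}"
| "vars (Pub t) = vars t"
| "vars (Sign s t) = vars s \<union> vars t"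
| "vars (Blind s t) = vars s \<union> vars t"
| "vars (Pr s t) = vars s \<union> vars t"
| "vars (Enc s t) = vars s \<union> vars t"
| "vars (Fn f ts) = \<Union> (set (map vars ts))"

definition ground :: "('n, 'f) trm \<Rightarrow> bool" where
  "ground t \<longleftrightarrow> vars t = {}"

primrec subst :: "(nat \<Rightarrow> ('n, 'f) trm) \<Rightarrow> ('n, 'f) trm \<Rightarrow> ('n, 'f) trm" where
  "subst \<sigma> (Nm a) = Nm a"
| "subst \<sigma> (V x) = \<sigma> x"
| "subst \<sigma> (Pub t) = Pub (subst \<sigma> t)"
| "subst \<sigma> (Sign s t) = Sign (subst \<sigma> s) (subst \<sigma> t)"
| "subst \<sigma> (Blind s t) = Blind (subst \<sigma> s) (subst \<sigma> t)"
| "subst \<sigma> (Pr s t) = Pr (subst \<sigma> s) (subst \<sigma> t)"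
| "subst \<sigma> (Enc s t) = Enc (subst \<sigma> s) (subst \<sigma> t)"
| "subst \<sigma> (Fn f ts) = Fn f (map (subst \<sigma>) ts)"

primrec wft :: "('f \<Rightarrow> nat) \<Rightarrow> ('n, 'f) trm \<Rightarrow> bool" where
  "wft ar (Nm a) = True"
| "wft ar (V x) = True"
| "wft ar (Pub t) = wft ar t"
| "wft ar (Sign s t) = (wft ar s \<and> wft ar t)"
| "wft ar (Blind s t) = (wft ar s \<and> wft ar t)"
| "wft ar (Pr s t) = (wft ar s \<and> wft ar t)"
| "wft ar (Enc s t) = (wft ar s \<and> wft ar t)"
| "wft ar (Fn f ts) = (length ts = ar f \<and> list_all id (map (wft ar) ts))"

text \<open>Terms built only from symbols of Sigma_E and variables (variables = holes).
  An E-context is such a term; C[M_1,...,M_k] is obtained by substitution.\<close>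
primrec is_ectx :: "('n, 'f) trm \<Rightarrow> bool" where
  "is_ectx (Nm a) = False"
| "is_ectx (V x) = True"
| "is_ectx (Pub t) = False"
| "is_ectx (Sign s t) = False"
| "is_ectx (Blind s t) = False"
| "is_ectx (Pr s t) = False"
| "is_ectx (Enc s t) = False"
| "is_ectx (Fn f ts) = list_all id (map is_ectx ts)"

primrec funs :: "('n, 'f) trm \<Rightarrow> 'f set" where
  "funs (Nm a) = {}"
| "funs (V x) = {}"
| "funs (Pub t) = funs t"
| "funs (Sign s t) = funs s \<union> funs t"
| "funs (Blind s t) = funs s \<union> funs t"
| "funs (Pr s t) = funs s \<union> funs t"
| "funs (Enc s t) = funs s \<union> funs t"
| "funs (Fn f ts) = insert f (\<Union> (set (map funs ts)))"

primrec subterms :: "('n, 'f) trm \<Rightarrow> ('n, 'f) trm set" where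
  "subterms (Nm a) = {Nm a}"
| "subterms (V x) = {V x}"
| "subterms (Pub t) = insert (Pub t) (subterms t)"
| "subterms (Sign s t) = insert (Sign s t) (subterms s \<union> subterms t)"
| "subterms (Blind s t) = insert (Blind s t) (subterms s \<union> subterms t)"
| "subterms (Pr s t) = insert (Pr s t) (subterms s \<union> subterms t)"
| "subterms (Enc s t) = insert (Enc s t) (subterms s \<union> subterms t)"
| "subterms (Fn f ts) = insert (Fn f ts) (\<Union> (set (map subterms ts)))"

primrec guarded :: "('n, 'f) trm \<Rightarrow> bool" where
  "guarded (Nm a) = True"
| "guarded (V x) = True"
| "guarded (Pub t) = True"
| "guarded (Sign s t) = True"
| "guarded (Blind s t) = True"
| "guarded (Pr s t) = True"
| "guarded (Enc s t) = True"
| "guarded (Fn f ts) = False"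

inductive ac_eq :: "'f set \<Rightarrow> ('n, 'f) trm \<Rightarrow> ('n, 'f) trm \<Rightarrow> bool" for acs where
  refl: "ac_eq acs t t"
| sym: "ac_eq acs s t \<Longrightarrow> ac_eq acs t s"
| trans: "ac_eq acs s t \<Longrightarrow> ac_eq acs t u \<Longrightarrow> ac_eq acs s u"
| pub: "ac_eq acs s s' \<Longrightarrow> ac_eq acs (Pub s) (Pub s')"
| sign: "ac_eq acs s s' \<Longrightarrow> ac_eq acs t t' \<Longrightarrow> ac_eq acs (Sign s t) (Sign s' t')"
| blind: "ac_eq acs s s' \<Longrightarrow> ac_eq acs t t' \<Longrightarrow> ac_eq acs (Blind s t) (Blind s' t')"
| pair: "ac_eq acs s s' \<Longrightarrow> ac_eq acs t t' \<Longrightarrow> ac_eq acs (Pr s t) (Pr s' t')"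
| enc: "ac_eq acs s s' \<Longrightarrow> ac_eq acs t t' \<Longrightarrow> ac_eq acs (Enc s t) (Enc s' t')"
| fn: "list_all2 (ac_eq acs) ts ts' \<Longrightarrow> ac_eq acs (Fn f ts) (Fn f ts')"
| comm: "f \<in> acs \<Longrightarrow> ac_eq acs (Fn f [s, t]) (Fn f [t, s])"
| assoc: "f \<in> acs \<Longrightarrow> ac_eq acs (Fn f [Fn f [s, t], u]) (Fn f [s, Fn f [t, u]])"

type_synonym ('n, 'f) rules = "(('n, 'f) trm \<times> ('n, 'f) trm) set"

inductive rstep :: "('n, 'f) rules \<Rightarrow> ('n, 'f) trm \<Rightarrow> ('n, 'f) trm \<Rightarrow> bool" for R where
  rule: "(l, r) \<in> R \<Longrightarrow> rstep R (subst \<sigma> l) (subst \<sigma> r)"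
| pub: "rstep R s s' \<Longrightarrow> rstep R (Pub s) (Pub s')"
| sign1: "rstep R s s' \<Longrightarrow> rstep R (Sign s t) (Sign s' t)"
| sign2: "rstep R t t' \<Longrightarrow> rstep R (Sign s t) (Sign s t')"
| blind1: "rstep R s s' \<Longrightarrow> rstep R (Blind s t) (Blind s' t)"
| blind2: "rstep R t t' \<Longrightarrow> rstep R (Blind s t) (Blind s t')"
| pair1: "rstep R s s' \<Longrightarrow> rstep R (Pr s t) (Pr s' t)"
| pair2: "rstep R t t' \<Longrightarrow> rstep R (Pr s t) (Pr s t')"
| enc1: "rstep R s s' \<Longrightarrow> rstep R (Enc s t) (Enc s' t)"
| enc2: "rstep R t t' \<Longrightarrow> rstep R (Enc s t) (Enc s t')"
| fn: "rstep R s s' \<Longrightarrow> rstep R (Fn f (us @ s # vs)) (Fn f (us @ s' # vs))"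

definition step_mod :: "('n, 'f) rules \<Rightarrow> 'f set \<Rightarrow> ('n, 'f) trm \<Rightarrow> ('n, 'f) trm \<Rightarrow> bool" where
  "step_mod R acs t t' \<longleftrightarrow> (\<exists>s s'. ac_eq acs t s \<and> rstep R s s' \<and> ac_eq acs s' t')"

definition normal :: "('n, 'f) rules \<Rightarrow> 'f set \<Rightarrow> ('n, 'f) trm \<Rightarrow> bool" where
  "normal R acs t \<longleftrightarrow> \<not> (\<exists>t'. step_mod R acs t t')"

text \<open>N is (a representative of) the normal form \<down>t of t modulo AC.\<close>
definition is_nf :: "('n, 'f) rules \<Rightarrow> 'f set \<Rightarrow> ('n, 'f) trm \<Rightarrow> ('n, 'f) trm \<Rightarrow> bool" where
  "is_nf R acs t N \<longleftrightarrow>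
     (\<exists>N0. (step_mod R acs)\<^sup>*\<^sup>* t N0 \<and> ac_eq acs N0 N) \<and> normal R acs N"

text \<open>Equality modulo E, where E is presented by R together with AC.\<close>
definition eqE :: "('n, 'f) rules \<Rightarrow> 'f set \<Rightarrow> ('n, 'f) trm \<Rightarrow> ('n, 'f) trm \<Rightarrow> bool" where
  "eqE R acs = (\<lambda>s t. rstep R s t \<or> rstep R t s \<or> ac_eq acs s t)\<^sup>*\<^sup>*"

definition rewrite_system :: "('f \<Rightarrow> nat) \<Rightarrow> ('n, 'f) rules \<Rightarrow> bool" where
  "rewrite_system ar R \<longleftrightarrow>
     (\<forall>(l, r) \<in> R. wft ar l \<and> wft ar r \<and> is_ectx l \<and> is_ectx r
                   \<and> vars r \<subseteq> vars l \<and> (\<forall>x. l \<noteq> V x))"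

definition terminating_mod :: "('f \<Rightarrow> nat) \<Rightarrow> ('n, 'f) rules \<Rightarrow> 'f set \<Rightarrow> bool" where
  "terminating_mod ar R acs \<longleftrightarrow>
     \<not> (\<exists>sq. wft ar (sq 0) \<and> (\<forall>i. step_mod R acs (sq i) (sq (Suc i))))"

definition confluent_mod :: "('f \<Rightarrow> nat) \<Rightarrow> ('n, 'f) rules \<Rightarrow> 'f set \<Rightarrow> bool" where
  "confluent_mod ar R acs \<longleftrightarrow>
     (\<forall>t u v. wft ar t \<longrightarrow> (step_mod R acs)\<^sup>*\<^sup>* t u \<longrightarrow> (step_mod R acs)\<^sup>*\<^sup>* t v \<longrightarrow>
        (\<exists>u' v'. (step_mod R acs)\<^sup>*\<^sup>* u u' \<and> (step_mod R acs)\<^sup>*\<^sup>* v v' \<and> ac_eq acs u' v'))"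

definition ac_convergent :: "('f \<Rightarrow> nat) \<Rightarrow> ('n, 'f) rules \<Rightarrow> 'f set \<Rightarrow> bool" where
  "ac_convergent ar R acs \<longleftrightarrow>
     rewrite_system ar R \<and> terminating_mod ar R acs \<and> confluent_mod ar R acs"

text \<open>Standing assumptions on E: Sigma_E (= all of 'f, arity ar) is partitioned into the
  signatures Sigma_i = {f. th f = i}, i < n, of the theories E_1..E_n; E_i is presented by
  the AC-convergent rewrite system Rs i (using only symbols of Sigma_i) modulo its AC
  symbols, of which there is at most one; ac is the set of all AC symbols (binary);
  R = R_E is the union of the Rs i and is terminating and confluent modulo AC.\<close>
definition E_theory :: "('f \<Rightarrow> nat) \<Rightarrow> 'f set \<Rightarrow> ('f \<Rightarrow> nat) \<Rightarrow> nat
    \<Rightarrow> (nat \<Rightarrow> ('n, 'f) rules) \<Rightarrow> ('n, 'f) rules \<Rightarrow> bool" where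
  "E_theory ar ac th n Rs R \<longleftrightarrow>
     (\<forall>f \<in> ac. ar f = 2) \<and>
     (\<forall>f. th f < n) \<and>
     (\<forall>f \<in> ac. \<forall>g \<in> ac. th f = th g \<longrightarrow> f = g) \<and>
     R = (\<Union>i<n. Rs i) \<and>
     (\<forall>i<n. (\<forall>(l, r) \<in> Rs i. funs l \<union> funs r \<subseteq> {f. th f = i})
            \<and> ac_convergent ar (Rs i) (ac \<inter> {f. th f = i})) \<and>
     ac_convergent ar R ac"

definition seq_ok :: "('f \<Rightarrow> nat) \<Rightarrow> 'f set \<Rightarrow> ('n, 'f) rules
    \<Rightarrow> ('n, 'f) trm set \<Rightarrow> ('n, 'f) trm \<Rightarrow> bool" where
  "seq_ok ar ac R \<Gamma> M \<longleftrightarrow> finite \<Gamma> \<and>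
     (\<forall>t \<in> insert M \<Gamma>. ground t \<and> wft ar t \<and> normal R ac t)"

text \<open>cfd ar ac R Gamma M: there is a cut-free derivation of Gamma |- M in S
  (all rules of S except (cut)).\<close>
inductive cfd :: "('f \<Rightarrow> nat) \<Rightarrow> 'f set \<Rightarrow> ('n, 'f) rules
    \<Rightarrow> ('n, 'f) trm set \<Rightarrow> ('n, 'f) trm \<Rightarrow> bool" for ar ac R where
  ident: "seq_ok ar ac R \<Gamma> M \<Longrightarrow> is_ectx C \<Longrightarrow> wft ar C \<Longrightarrow> (\<forall>x \<in> vars C. \<sigma> x \<in> \<Gamma>)
     \<Longrightarrow> eqE R ac M (subst \<sigma> C) \<Longrightarrow> cfd ar ac R \<Gamma> M"
| pL: "seq_ok ar ac R \<Gamma> T \<Longrightarrow> Pr M N \<in> \<Gamma> \<Longrightarrow> cfd ar ac R (\<Gamma> \<union> {M, N}) T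
     \<Longrightarrow> cfd ar ac R \<Gamma> T"
| pR: "seq_ok ar ac R \<Gamma> (Pr M N) \<Longrightarrow> cfd ar ac R \<Gamma> M \<Longrightarrow> cfd ar ac R \<Gamma> N
     \<Longrightarrow> cfd ar ac R \<Gamma> (Pr M N)"
| eL: "seq_ok ar ac R \<Gamma> N \<Longrightarrow> Enc M K \<in> \<Gamma> \<Longrightarrow> cfd ar ac R \<Gamma> K
     \<Longrightarrow> cfd ar ac R (\<Gamma> \<union> {M, K}) N \<Longrightarrow> cfd ar ac R \<Gamma> N"
| eR: "seq_ok ar ac R \<Gamma> (Enc M K) \<Longrightarrow> cfd ar ac R \<Gamma> M \<Longrightarrow> cfd ar ac R \<Gamma> K
     \<Longrightarrow> cfd ar ac R \<Gamma> (Enc M K)"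
| signL: "seq_ok ar ac R \<Gamma> N \<Longrightarrow> Sign M K \<in> \<Gamma> \<Longrightarrow> Pub L \<in> \<Gamma> \<Longrightarrow> ac_eq ac K L
     \<Longrightarrow> cfd ar ac R (insert M \<Gamma>) N \<Longrightarrow> cfd ar ac R \<Gamma> N"
| signR: "seq_ok ar ac R \<Gamma> (Sign M K) \<Longrightarrow> cfd ar ac R \<Gamma> M \<Longrightarrow> cfd ar ac R \<Gamma> K
     \<Longrightarrow> cfd ar ac R \<Gamma> (Sign M K)"
| blindL1: "seq_ok ar ac R \<Gamma> N \<Longrightarrow> Blind M K \<in> \<Gamma> \<Longrightarrow> cfd ar ac R \<Gamma> K
     \<Longrightarrow> cfd ar ac R (\<Gamma> \<union> {M, K}) N \<Longrightarrow> cfd ar ac R \<Gamma> N"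
| blindR: "seq_ok ar ac R \<Gamma> (Blind M K) \<Longrightarrow> cfd ar ac R \<Gamma> M \<Longrightarrow> cfd ar ac R \<Gamma> K
     \<Longrightarrow> cfd ar ac R \<Gamma> (Blind M K)"
| blindL2: "seq_ok ar ac R \<Gamma> N \<Longrightarrow> Sign (Blind M Q) K \<in> \<Gamma> \<Longrightarrow> cfd ar ac R \<Gamma> Q
     \<Longrightarrow> cfd ar ac R (\<Gamma> \<union> {Sign M K, Q}) N \<Longrightarrow> cfd ar ac R \<Gamma> N"
| gs: "seq_ok ar ac R \<Gamma> M \<Longrightarrow> t \<in> insert M \<Gamma> \<Longrightarrow> A \<in> subterms t \<Longrightarrow> guarded A
     \<Longrightarrow> cfd ar ac R \<Gamma> A \<Longrightarrow> cfd ar ac R (insert A \<Gamma>) M \<Longrightarrow> cfd ar ac R \<Gamma> M"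

end

theory Submission
  imports Defs "HOL-Library.Nat_Bijection"
begin

text \<open>
  Rewriting \<open>f(X\<^sub>1, \<dots>, X\<^sub>k)\<close> with rules whose sides are E-contexts creates no new guarded
  subterms: as long as all guarded subterms are normal, no redex lies below a constructor, so
  every guarded subterm of the normal form \<open>N\<close> is AC-equal to a guarded subterm of some
  \<open>X\<^sub>i\<close>. Moreover \<open>N\<close> is E-equal to the E-context \<open>f(x\<^sub>1, \<dots>, x\<^sub>k)\<close> filled with the \<open>X\<^sub>i\<close>.
  A hypothesis with these two properties relative to the remaining context can be dropped from
  a cut-free derivation: in an (id) axiom it is replaced by its E-context, and a left rule or a
  (gs) step acting on it is redirected, through (gs), to the AC-equal guarded subterm of some
  \<open>X\<^sub>i\<close>. This redirection replaces terms by AC-variants, so the induction is carried out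
  modulo AC.
\<close>

lemma subterms_refl [simp]: "t \<in> subterms t"
  by (cases t) auto

lemma subterms_trans: "s \<in> subterms t \<Longrightarrow> t \<in> subterms u \<Longrightarrow> s \<in> subterms u"
  by (induction u) auto

lemma vars_subterm: "s \<in> subterms t \<Longrightarrow> vars s \<subseteq> vars t"
  by (induction t) auto

lemma wft_subterm: "s \<in> subterms t \<Longrightarrow> wft ar t \<Longrightarrow> wft ar s"
  by (induction t) (auto simp: list_all_iff)

lemma subst_subst: "subst \<sigma> (subst \<rho> t) = subst (\<lambda>x. subst \<sigma> (\<rho> x)) t"
  by (induction t) auto

lemma vars_subst: "vars (subst \<rho> t) = (\<Union>x\<in>vars t. vars (\<rho> x))"
  by (induction t) auto

lemma is_ectx_subst: "is_ectx t \<Longrightarrow> (\<forall>x\<in>vars t. is_ectx (\<rho> x)) \<Longrightarrow> is_ectx (subst \<rho> t)"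
  by (induction t) (auto simp: list_all_iff)

lemma wft_subst: "wft ar t \<Longrightarrow> (\<forall>x\<in>vars t. wft ar (\<rho> x)) \<Longrightarrow> wft ar (subst \<rho> t)"
  by (induction t) (auto simp: list_all_iff)

lemma subst_var_subterm: "x \<in> vars t \<Longrightarrow> \<sigma> x \<in> subterms (subst \<sigma> t)"
  by (induction t) auto

lemma guarded_subterm_subst_ectx:
  "is_ectx C \<Longrightarrow> A \<in> subterms (subst \<sigma> C) \<Longrightarrow> guarded A \<Longrightarrow> \<exists>x\<in>vars C. A \<in> subterms (\<sigma> x)"
  by (induction C) (auto simp: list_all_iff, blast)

fun same_head_ac :: "'f set \<Rightarrow> ('n, 'f) trm \<Rightarrow> ('n, 'f) trm \<Rightarrow> bool" where
  "same_head_ac acs (Nm a) t = (t = Nm a)"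
| "same_head_ac acs (V x) t = (t = V x)"
| "same_head_ac acs (Pub s) t = (\<exists>s'. t = Pub s' \<and> ac_eq acs s s')"
| "same_head_ac acs (Sign s u) t = (\<exists>s' u'. t = Sign s' u' \<and> ac_eq acs s s' \<and> ac_eq acs u u')"
| "same_head_ac acs (Blind s u) t = (\<exists>s' u'. t = Blind s' u' \<and> ac_eq acs s s' \<and> ac_eq acs u u')"
| "same_head_ac acs (Pr s u) t = (\<exists>s' u'. t = Pr s' u' \<and> ac_eq acs s s' \<and> ac_eq acs u u')"
| "same_head_ac acs (Enc s u) t = (\<exists>s' u'. t = Enc s' u' \<and> ac_eq acs s s' \<and> ac_eq acs u u')"
| "same_head_ac acs (Fn f ts) t = (\<exists>ts'. t = Fn f ts')"

lemma ac_eq_same_head: "ac_eq acs s t \<Longrightarrow> same_head_ac acs s t"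
proof (induction rule: ac_eq.induct)
  case (refl t)
  then show ?case by (cases t) (auto intro: ac_eq.refl)
next
  case (sym s t)
  then show ?case by (cases s) (auto intro: ac_eq.sym)
next
  case (trans s t u)
  then show ?case by (cases s) (auto, (meson ac_eq.trans)+)
qed auto

definition guarded_covered :: "'f set \<Rightarrow> ('n, 'f) trm set \<Rightarrow> ('n, 'f) trm \<Rightarrow> bool" where
  "guarded_covered acs \<Delta> t \<longleftrightarrow>
     (\<forall>A\<in>subterms t. guarded A \<longrightarrow> (\<exists>X\<in>\<Delta>. \<exists>B\<in>subterms X. guarded B \<and> ac_eq acs B A))"

lemma guarded_covered_mono: "\<Delta> \<subseteq> \<Delta>' \<Longrightarrow> guarded_covered acs \<Delta> t \<Longrightarrow> guarded_covered acs \<Delta>' t"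
  unfolding guarded_covered_def by blast

lemma guarded_covered_trans:
  "guarded_covered acs \<Delta> t \<Longrightarrow> guarded_covered acs {t} u \<Longrightarrow> guarded_covered acs \<Delta> u"
  unfolding guarded_covered_def by simp (meson ac_eq.trans)

lemma ac_eq_guarded_covered: "ac_eq acs s t \<Longrightarrow> guarded_covered acs {s} t"
proof -
  assume "ac_eq acs s t"
  then have "guarded_covered acs {s} t \<and> guarded_covered acs {t} s"
  proof (induction rule: ac_eq.induct)
    case (trans s t u)
    then show ?case by (blast intro: guarded_covered_trans)
  next
    case (fn ts ts' f)
    then show ?case
      unfolding guarded_covered_def list_all2_conv_all_nth
      by (fastforce simp: in_set_conv_nth)
  qed (auto simp: guarded_covered_def intro: ac_eq.intros)
  then show ?thesis ..
qed

lemma normal_ac_eq: "ac_eq acs s t \<Longrightarrow> normal R acs t \<Longrightarrow> normal R acs s"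
  unfolding normal_def step_mod_def by (blast intro: ac_eq.trans ac_eq.sym)

lemma rstep_not_normal: "rstep R s s' \<Longrightarrow> \<not> normal R acs s"
  unfolding normal_def step_mod_def by (blast intro: ac_eq.refl)

lemma step_mod_cong:
  assumes "step_mod R acs s s'"
  shows "step_mod R acs (Pub s) (Pub s')"
    and "step_mod R acs (Sign s t) (Sign s' t)" "step_mod R acs (Sign t s) (Sign t s')"
    and "step_mod R acs (Blind s t) (Blind s' t)" "step_mod R acs (Blind t s) (Blind t s')"
    and "step_mod R acs (Pr s t) (Pr s' t)" "step_mod R acs (Pr t s) (Pr t s')"
    and "step_mod R acs (Enc s t) (Enc s' t)" "step_mod R acs (Enc t s) (Enc t s')"
  using assms unfolding step_mod_def by (meson ac_eq.intros rstep.intros)+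

lemma step_mod_subterm:
  "step_mod R acs s s' \<Longrightarrow> s \<in> subterms t \<Longrightarrow> \<exists>t'. step_mod R acs t t'"
proof (induction t)
  case (Fn g ts)
  show ?case
  proof (cases "s = Fn g ts")
    case False
    then obtain u where u: "u \<in> set ts" "s \<in> subterms u"
      using Fn.prems by auto
    then obtain u' where "step_mod R acs u u'"
      using Fn by blast
    then obtain a b where ab: "ac_eq acs u a" "rstep R a b"
      unfolding step_mod_def by blast
    obtain us vs where ts: "ts = us @ u # vs"
      using split_list[OF u(1)] by blast
    have "ac_eq acs (Fn g ts) (Fn g (us @ a # vs))"
      unfolding ts
      by (intro ac_eq.fn list_all2_appendI) (simp_all add: ab list_all2_same ac_eq.refl)
    moreover have "rstep R (Fn g (us @ a # vs)) (Fn g (us @ b # vs))"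
      using ab(2) by (rule rstep.fn)
    ultimately show ?thesis
      unfolding step_mod_def by (blast intro: ac_eq.refl)
  qed (use Fn in blast)
qed (auto, (blast intro: step_mod_cong)+)

lemma normal_subterm: "normal R acs t \<Longrightarrow> s \<in> subterms t \<Longrightarrow> normal R acs s"
  using step_mod_subterm unfolding normal_def by blast

lemma rule_lhs_is_Fn:
  "rewrite_system ar R \<Longrightarrow> (l, r) \<in> R \<Longrightarrow> \<exists>g ts. subst \<sigma> l = Fn g ts"
  unfolding rewrite_system_def by (cases l) auto

lemma normal_Sign:
  assumes "rewrite_system ar R" and "normal R acs M" and "normal R acs K"
  shows "normal R acs (Sign M K)"
  unfolding normal_def
proof
  assume "\<exists>t. step_mod R acs (Sign M K) t"
  then obtain s s' where "ac_eq acs (Sign M K) s" and step: "rstep R s s'"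
    unfolding step_mod_def by blast
  then obtain m k where s: "s = Sign m k" and "ac_eq acs M m" "ac_eq acs K k"
    using ac_eq_same_head by fastforce
  then have "normal R acs m" "normal R acs k"
    using assms(2,3) normal_ac_eq ac_eq.sym by blast+
  from step show False
    unfolding s
  proof cases
    case (rule l r \<sigma>)
    then show False
      using rule_lhs_is_Fn[OF assms(1), of l r \<sigma>] by auto
  qed (use \<open>normal R acs m\<close> \<open>normal R acs k\<close> in \<open>auto dest: rstep_not_normal\<close>)
qed

lemma rstep_guarded_subterms:
  assumes "rstep R s s'" and "rewrite_system ar R"
  shows "\<forall>A\<in>subterms s. guarded A \<longrightarrow> normal R acs A
    \<Longrightarrow> \<forall>A\<in>subterms s'. guarded A \<longrightarrow> A \<in> subterms s"
  using assms(1)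
proof (induction rule: rstep.induct)
  case (rule l r \<sigma>)
  have "is_ectx r" "vars r \<subseteq> vars l"
    using rule.hyps assms(2) unfolding rewrite_system_def by auto
  then show ?case
    by (blast dest: guarded_subterm_subst_ectx intro: subterms_trans subst_var_subterm)
next
  case (fn s s' f us vs)
  then show ?case by auto
qed (meson guarded.simps rstep.intros rstep_not_normal subterms_refl)+

lemma guarded_covered_steps:
  assumes "(step_mod R acs)\<^sup>*\<^sup>* s t" and "rewrite_system ar R"
    and "\<forall>X\<in>\<Delta>. normal R acs X" and "guarded_covered acs \<Delta> s"
  shows "guarded_covered acs \<Delta> t"
  using assms(1,4)
proof (induction rule: rtranclp_induct)
  case (step u v)
  then obtain a b where "ac_eq acs u a" "rstep R a b" "ac_eq acs b v"
    unfolding step_mod_def by blast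
  have a: "guarded_covered acs \<Delta> a"
    using step \<open>ac_eq acs u a\<close> ac_eq_guarded_covered guarded_covered_trans by blast
  have "\<forall>A\<in>subterms a. guarded A \<longrightarrow> normal R acs A"
    using a assms(3) unfolding guarded_covered_def
    by (meson normal_subterm normal_ac_eq ac_eq.sym)
  then have "guarded_covered acs \<Delta> b"
    using a rstep_guarded_subterms[OF \<open>rstep R a b\<close> assms(2)]
    unfolding guarded_covered_def by blast
  then show ?case
    using \<open>ac_eq acs b v\<close> ac_eq_guarded_covered guarded_covered_trans by blast
qed simp

lemma rtranclp_map:
  "(\<And>x y. r x y \<Longrightarrow> s (f x) (f y)) \<Longrightarrow> r\<^sup>*\<^sup>* x y \<Longrightarrow> s\<^sup>*\<^sup>* (f x) (f y)"
  by (erule rtranclp_induct) (auto intro: rtranclp.rtrancl_into_rtrancl)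

lemma eqE_refl [simp]: "eqE R acs t t"
  unfolding eqE_def by simp

lemma eqE_trans [trans]: "eqE R acs s t \<Longrightarrow> eqE R acs t u \<Longrightarrow> eqE R acs s u"
  unfolding eqE_def by simp

lemma eqE_sym: "eqE R acs s t \<Longrightarrow> eqE R acs t s"
  unfolding eqE_def by (rule sympD[OF symp_rtranclp]) (auto intro: sympI ac_eq.sym)

lemma ac_eq_imp_eqE: "ac_eq acs s t \<Longrightarrow> eqE R acs s t"
  unfolding eqE_def by (simp add: r_into_rtranclp)

lemma rstep_imp_eqE: "rstep R s t \<Longrightarrow> eqE R acs s t"
  unfolding eqE_def by (simp add: r_into_rtranclp)

lemma steps_imp_eqE: "(step_mod R acs)\<^sup>*\<^sup>* s t \<Longrightarrow> eqE R acs s t"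
proof (induction rule: rtranclp_induct)
  case (step u v)
  then obtain a b where "ac_eq acs u a" "rstep R a b" "ac_eq acs b v"
    unfolding step_mod_def by blast
  then have "eqE R acs u v"
    by (meson ac_eq_imp_eqE rstep_imp_eqE eqE_trans)
  with step.IH show ?case by (rule eqE_trans)
qed simp

lemma eqE_Fn_arg:
  assumes "eqE R acs a b"
  shows "eqE R acs (Fn g (us @ a # vs)) (Fn g (us @ b # vs))"
proof -
  have "ac_eq acs (Fn g (us @ x # vs)) (Fn g (us @ y # vs))" if "ac_eq acs x y" for x y
    using that by (intro ac_eq.fn list_all2_appendI) (simp_all add: list_all2_same ac_eq.refl)
  with assms show ?thesis
    unfolding eqE_def
    by (elim rtranclp_map[where f = "\<lambda>x. Fn g (us @ x # vs)", rotated]) (blast intro: rstep.fn)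
qed

lemma eqE_Fn:
  assumes "list_all2 (eqE R acs) ts ts'"
  shows "eqE R acs (Fn g ts) (Fn g ts')"
proof -
  have "eqE R acs (Fn g (us @ ts)) (Fn g (us @ ts'))" for us
    using assms
  proof (induction arbitrary: us rule: list_all2_induct)
    case (Cons a ts b ts')
    have "eqE R acs (Fn g (us @ a # ts)) (Fn g (us @ b # ts))"
      using Cons.hyps(1) by (rule eqE_Fn_arg)
    also have "eqE R acs \<dots> (Fn g (us @ b # ts'))"
      using Cons.IH[of "us @ [b]"] by simp
    finally show ?case .
  qed simp
  from this[of "[]"] show ?thesis by simp
qed

lemma eqE_subst_ectx:
  "is_ectx C \<Longrightarrow> (\<forall>x\<in>vars C. eqE R acs (\<sigma> x) (\<tau> x)) \<Longrightarrow> eqE R acs (subst \<sigma> C) (subst \<tau> C)"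
proof (induction C)
  case (Fn g ts)
  then show ?case
    by (auto intro!: eqE_Fn simp: list_all2_map1 list_all2_map2 list_all2_same list_all_iff)
qed auto

definition sequent_term :: "('f \<Rightarrow> nat) \<Rightarrow> 'f set \<Rightarrow> ('n, 'f) rules \<Rightarrow> ('n, 'f) trm \<Rightarrow> bool" where
  "sequent_term ar ac R t \<longleftrightarrow> ground t \<and> wft ar t \<and> normal R ac t"

lemma seq_ok_iff:
  "seq_ok ar ac R \<Gamma> M \<longleftrightarrow> finite \<Gamma> \<and> sequent_term ar ac R M \<and> (\<forall>t\<in>\<Gamma>. sequent_term ar ac R t)"
  unfolding seq_ok_def sequent_term_def by blast

lemma sequent_term_subterm: "sequent_term ar ac R t \<Longrightarrow> s \<in> subterms t \<Longrightarrow> sequent_term ar ac R s"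
  unfolding sequent_term_def ground_def using vars_subterm wft_subterm normal_subterm by blast

lemma cfd_seq_ok: "cfd ar ac R \<Gamma> M \<Longrightarrow> seq_ok ar ac R \<Gamma> M"
  by (erule cfd.cases) auto

definition id_derivable :: "('f \<Rightarrow> nat) \<Rightarrow> 'f set \<Rightarrow> ('n, 'f) rules
    \<Rightarrow> ('n, 'f) trm set \<Rightarrow> ('n, 'f) trm \<Rightarrow> bool" where
  "id_derivable ar ac R \<Delta> t \<longleftrightarrow>
     (\<exists>C \<sigma>. is_ectx C \<and> wft ar C \<and> (\<forall>x\<in>vars C. \<sigma> x \<in> \<Delta>) \<and> eqE R ac t (subst \<sigma> C))"

lemma cfd_id_derivable: "seq_ok ar ac R \<Delta> t \<Longrightarrow> id_derivable ar ac R \<Delta> t \<Longrightarrow> cfd ar ac R \<Delta> t"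
  unfolding id_derivable_def by (blast intro: cfd.ident)

lemma id_derivable_member: "t \<in> \<Delta> \<Longrightarrow> id_derivable ar ac R \<Delta> t"
  unfolding id_derivable_def by (rule exI[of _ "V 0"], rule exI[of _ "\<lambda>_. t"]) simp

lemma id_derivable_eqE: "eqE R ac t u \<Longrightarrow> id_derivable ar ac R \<Delta> u \<Longrightarrow> id_derivable ar ac R \<Delta> t"
  unfolding id_derivable_def by (meson eqE_trans)

lemma id_derivable_mono: "\<Delta> \<subseteq> \<Delta>' \<Longrightarrow> id_derivable ar ac R \<Delta> t \<Longrightarrow> id_derivable ar ac R \<Delta>' t"
  unfolding id_derivable_def by blast

lemma id_derivable_ectx:
  assumes "is_ectx C" and "wft ar C" and "\<forall>x\<in>vars C. id_derivable ar ac R \<Delta> (\<sigma> x)"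
    and "eqE R ac t (subst \<sigma> C)"
  shows "id_derivable ar ac R \<Delta> t"
proof -
  obtain D \<tau> where D: "\<And>x. x \<in> vars C \<Longrightarrow> is_ectx (D x) \<and> wft ar (D x)
      \<and> (\<forall>y\<in>vars (D x). \<tau> x y \<in> \<Delta>) \<and> eqE R ac (\<sigma> x) (subst (\<tau> x) (D x))"
    using assms(3) unfolding id_derivable_def by metis
  \<comment> \<open>rename the variables of the contexts \<open>D x\<close> apart by pairing them with \<open>x\<close>\<close>
  define \<rho> where "\<rho> x = subst (\<lambda>y. V (prod_encode (x, y))) (D x)" for x
  define \<tau>' where "\<tau>' z = (case prod_decode z of (x, y) \<Rightarrow> \<tau> x y)" for z
  have \<rho>: "subst \<tau>' (\<rho> x) = subst (\<tau> x) (D x)" for x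
    by (simp add: \<rho>_def \<tau>'_def subst_subst)
  have "is_ectx (subst \<rho> C)"
    using assms(1) D by (intro is_ectx_subst) (auto simp: \<rho>_def intro: is_ectx_subst)
  moreover have "wft ar (subst \<rho> C)"
    using assms(2) D by (intro wft_subst) (auto simp: \<rho>_def intro: wft_subst)
  moreover have "\<forall>z\<in>vars (subst \<rho> C). \<tau>' z \<in> \<Delta>"
    using D by (auto simp: vars_subst \<rho>_def \<tau>'_def)
  moreover have "eqE R ac t (subst \<tau>' (subst \<rho> C))"
    using assms(4) eqE_subst_ectx[OF assms(1), where \<tau> = "\<lambda>x. subst \<tau>' (\<rho> x)"] D
    by (simp add: subst_subst \<rho> eqE_trans)
  ultimately show ?thesis
    unfolding id_derivable_def by blast
qed

definition recoverable :: "('f \<Rightarrow> nat) \<Rightarrow> 'f set \<Rightarrow> ('n, 'f) rules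
    \<Rightarrow> ('n, 'f) trm set \<Rightarrow> ('n, 'f) trm \<Rightarrow> bool" where
  "recoverable ar ac R \<Delta> t \<longleftrightarrow> id_derivable ar ac R \<Delta> t \<and> guarded_covered ac \<Delta> t"

lemma recoverable_mono: "\<Delta> \<subseteq> \<Delta>' \<Longrightarrow> recoverable ar ac R \<Delta> t \<Longrightarrow> recoverable ar ac R \<Delta>' t"
  unfolding recoverable_def using id_derivable_mono guarded_covered_mono by blast

lemma recoverable_ac_member: "t' \<in> \<Delta> \<Longrightarrow> ac_eq ac t t' \<Longrightarrow> recoverable ar ac R \<Delta> t"
  unfolding recoverable_def
  by (meson ac_eq.sym ac_eq_guarded_covered ac_eq_imp_eqE empty_subsetI guarded_covered_mono
      id_derivable_eqE id_derivable_member insert_subset)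

lemma cfd_recoverable_guardedE:
  assumes "recoverable ar ac R \<Delta> P" and "guarded P" and "seq_ok ar ac R \<Delta> T"
    and "\<And>P'. ac_eq ac P P' \<Longrightarrow> sequent_term ar ac R P' \<Longrightarrow> cfd ar ac R (insert P' \<Delta>) T"
  shows "cfd ar ac R \<Delta> T"
proof -
  have "guarded_covered ac \<Delta> P" and "id_derivable ar ac R \<Delta> P"
    using assms(1) unfolding recoverable_def by blast+
  then obtain X P' where "X \<in> \<Delta>" "P' \<in> subterms X" "guarded P'" "ac_eq ac P' P"
    using assms(2) subterms_refl unfolding guarded_covered_def by blast
  have "sequent_term ar ac R P'"
    using assms(3) \<open>X \<in> \<Delta>\<close> \<open>P' \<in> subterms X\<close> by (meson seq_ok_iff sequent_term_subterm)
  have "cfd ar ac R \<Delta> P'"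
  proof (rule cfd_id_derivable)
    show "seq_ok ar ac R \<Delta> P'"
      using assms(3) \<open>sequent_term ar ac R P'\<close> by (simp add: seq_ok_iff)
    show "id_derivable ar ac R \<Delta> P'"
      using \<open>ac_eq ac P' P\<close> \<open>id_derivable ar ac R \<Delta> P\<close> by (rule id_derivable_eqE[OF ac_eq_imp_eqE])
  qed
  moreover have "cfd ar ac R (insert P' \<Delta>) T"
    using ac_eq.sym[OF \<open>ac_eq ac P' P\<close>] \<open>sequent_term ar ac R P'\<close> by (rule assms(4))
  ultimately show ?thesis
    using assms(3) \<open>X \<in> \<Delta>\<close> \<open>P' \<in> subterms X\<close> \<open>guarded P'\<close>
    by (intro cfd.gs[of ar ac R \<Delta> T X P']) auto
qed

lemma recoverable_extend:
  assumes "\<forall>B\<in>\<Gamma>. recoverable ar ac R \<Delta> B" and "\<Delta> \<subseteq> \<Delta>'" and "\<forall>t\<in>S. \<exists>t'\<in>\<Delta>'. ac_eq ac t t'"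
  shows "\<forall>B\<in>\<Gamma> \<union> S. recoverable ar ac R \<Delta>' B"
proof
  fix B assume "B \<in> \<Gamma> \<union> S"
  then show "recoverable ar ac R \<Delta>' B"
  proof
    assume "B \<in> \<Gamma>"
    with assms(1,2) show ?thesis by (blast intro: recoverable_mono)
  next
    assume "B \<in> S"
    with assms(3) show ?thesis by (blast intro: recoverable_ac_member)
  qed
qed

lemma cfd_recoverable_context:
  assumes "cfd ar ac R \<Gamma> T" and "rewrite_system ar R"
  shows "seq_ok ar ac R \<Delta> T' \<Longrightarrow> ac_eq ac T T' \<Longrightarrow> \<forall>B\<in>\<Gamma>. recoverable ar ac R \<Delta> B
    \<Longrightarrow> cfd ar ac R \<Delta> T'"
  using assms(1)
proof (induction arbitrary: \<Delta> T' rule: cfd.induct)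
  case (ident \<Gamma> M C \<sigma>)
  have "eqE R ac T' (subst \<sigma> C)"
    using ident.hyps(5) ident.prems(2) by (meson ac_eq.sym ac_eq_imp_eqE eqE_trans)
  then have "id_derivable ar ac R \<Delta> T'"
    using ident.hyps(4) ident.prems(3)
    by (intro id_derivable_ectx[OF ident.hyps(2,3)]) (auto simp: recoverable_def)
  with ident.prems(1) show ?case by (rule cfd_id_derivable)
next
  case (pL \<Gamma> T M N)
  show ?case
  proof (rule cfd_recoverable_guardedE[OF _ _ pL.prems(1)])
    fix P' assume "ac_eq ac (Pr M N) P'" "sequent_term ar ac R P'"
    then obtain a b where P': "P' = Pr a b" "ac_eq ac M a" "ac_eq ac N b"
      using ac_eq_same_head by fastforce
    have "cfd ar ac R (insert P' \<Delta> \<union> {a, b}) T'"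
      using pL.prems P' \<open>sequent_term ar ac R P'\<close>
      by (intro pL.IH recoverable_extend[OF pL.prems(3)])
        (auto simp: seq_ok_iff intro: sequent_term_subterm)
    then show "cfd ar ac R (insert P' \<Delta>) T'"
      using pL.prems(1) \<open>sequent_term ar ac R P'\<close> P'(1)
      by (intro cfd.pL[of ar ac R "insert P' \<Delta>" T' a b]) (auto simp: seq_ok_iff)
  qed (use pL.hyps(2) pL.prems(3) in auto)
next
  case (pR \<Gamma> M N)
  from ac_eq_same_head[OF pR.prems(2)] obtain M' N'
    where T': "T' = Pr M' N'" "ac_eq ac M M'" "ac_eq ac N N'"
    by auto
  have "seq_ok ar ac R \<Delta> M'" "seq_ok ar ac R \<Delta> N'"
    using pR.prems(1) T'(1) by (auto simp: seq_ok_iff intro: sequent_term_subterm)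
  with pR.prems(3) T'(2,3) have "cfd ar ac R \<Delta> M'" "cfd ar ac R \<Delta> N'"
    by (simp_all add: pR.IH)
  with pR.prems(1) show ?case
    unfolding T'(1) by (rule cfd.pR)
next
  case (eL \<Gamma> T M K)
  show ?case
  proof (rule cfd_recoverable_guardedE[OF _ _ eL.prems(1)])
    fix P' assume "ac_eq ac (Enc M K) P'" "sequent_term ar ac R P'"
    then obtain a b where P': "P' = Enc a b" "ac_eq ac M a" "ac_eq ac K b"
      using ac_eq_same_head by fastforce
    have "cfd ar ac R (insert P' \<Delta>) b"
      using eL.prems P' \<open>sequent_term ar ac R P'\<close>
      by (intro eL.IH(1))
        (auto simp: seq_ok_iff intro: sequent_term_subterm recoverable_mono[OF subset_insertI])
    moreover have "cfd ar ac R (insert P' \<Delta> \<union> {a, b}) T'"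
      using eL.prems P' \<open>sequent_term ar ac R P'\<close>
      by (intro eL.IH(2) recoverable_extend[OF eL.prems(3)])
        (auto simp: seq_ok_iff intro: sequent_term_subterm)
    ultimately show "cfd ar ac R (insert P' \<Delta>) T'"
      using eL.prems(1) \<open>sequent_term ar ac R P'\<close> P'(1)
      by (intro cfd.eL[of ar ac R "insert P' \<Delta>" T' a b]) (auto simp: seq_ok_iff)
  qed (use eL.hyps(2) eL.prems(3) in auto)
next
  case (eR \<Gamma> M N)
  from ac_eq_same_head[OF eR.prems(2)] obtain M' N'
    where T': "T' = Enc M' N'" "ac_eq ac M M'" "ac_eq ac N N'"
    by auto
  have "seq_ok ar ac R \<Delta> M'" "seq_ok ar ac R \<Delta> N'"
    using eR.prems(1) T'(1) by (auto simp: seq_ok_iff intro: sequent_term_subterm)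
  with eR.prems(3) T'(2,3) have "cfd ar ac R \<Delta> M'" "cfd ar ac R \<Delta> N'"
    by (simp_all add: eR.IH)
  with eR.prems(1) show ?case
    unfolding T'(1) by (rule cfd.eR)
next
  case (signL \<Gamma> T M K L)
  show ?case
  proof (rule cfd_recoverable_guardedE[OF _ _ signL.prems(1)])
    fix P' assume "ac_eq ac (Sign M K) P'" "sequent_term ar ac R P'"
    then obtain a b where P': "P' = Sign a b" "ac_eq ac M a" "ac_eq ac K b"
      using ac_eq_same_head by fastforce
    have seq: "seq_ok ar ac R (insert P' \<Delta>) T'"
      using signL.prems(1) \<open>sequent_term ar ac R P'\<close> by (simp add: seq_ok_iff)
    have rec: "recoverable ar ac R (insert P' \<Delta>) (Pub L)"
      using signL.hyps(3) signL.prems(3) recoverable_mono[OF subset_insertI] by blast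
    show "cfd ar ac R (insert P' \<Delta>) T'"
    proof (rule cfd_recoverable_guardedE[OF rec _ seq])
      fix Q' assume "ac_eq ac (Pub L) Q'" "sequent_term ar ac R Q'"
      then obtain l where Q': "Q' = Pub l" "ac_eq ac L l"
        using ac_eq_same_head by fastforce
      have "ac_eq ac b l"
        using P'(3) signL.hyps(4) Q'(2) by (meson ac_eq.sym ac_eq.trans)
      moreover have "\<forall>B\<in>\<Gamma> \<union> {M}. recoverable ar ac R (insert a (insert Q' (insert P' \<Delta>))) B"
        using P'(2) by (intro recoverable_extend[OF signL.prems(3)]) auto
      then have "cfd ar ac R (insert a (insert Q' (insert P' \<Delta>))) T'"
        using signL.prems(1,2) P' \<open>sequent_term ar ac R P'\<close> \<open>sequent_term ar ac R Q'\<close>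
        by (intro signL.IH) (auto simp: seq_ok_iff intro: sequent_term_subterm)
      ultimately show "cfd ar ac R (insert Q' (insert P' \<Delta>)) T'"
        using signL.prems(1) \<open>sequent_term ar ac R P'\<close> \<open>sequent_term ar ac R Q'\<close> P'(1) Q'(1)
        by (intro cfd.signL[of ar ac R "insert Q' (insert P' \<Delta>)" T' a b l]) (auto simp: seq_ok_iff)
    qed simp
  qed (use signL.hyps(2) signL.prems(3) in auto)
next
  case (signR \<Gamma> M N)
  from ac_eq_same_head[OF signR.prems(2)] obtain M' N'
    where T': "T' = Sign M' N'" "ac_eq ac M M'" "ac_eq ac N N'"
    by auto
  have "seq_ok ar ac R \<Delta> M'" "seq_ok ar ac R \<Delta> N'"
    using signR.prems(1) T'(1) by (auto simp: seq_ok_iff intro: sequent_term_subterm)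
  with signR.prems(3) T'(2,3) have "cfd ar ac R \<Delta> M'" "cfd ar ac R \<Delta> N'"
    by (simp_all add: signR.IH)
  with signR.prems(1) show ?case
    unfolding T'(1) by (rule cfd.signR)
next
  case (blindL1 \<Gamma> T M K)
  show ?case
  proof (rule cfd_recoverable_guardedE[OF _ _ blindL1.prems(1)])
    fix P' assume "ac_eq ac (Blind M K) P'" "sequent_term ar ac R P'"
    then obtain a b where P': "P' = Blind a b" "ac_eq ac M a" "ac_eq ac K b"
      using ac_eq_same_head by fastforce
    have "cfd ar ac R (insert P' \<Delta>) b"
      using blindL1.prems P' \<open>sequent_term ar ac R P'\<close>
      by (intro blindL1.IH(1))
        (auto simp: seq_ok_iff intro: sequent_term_subterm recoverable_mono[OF subset_insertI])
    moreover have "cfd ar ac R (insert P' \<Delta> \<union> {a, b}) T'"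
      using blindL1.prems P' \<open>sequent_term ar ac R P'\<close>
      by (intro blindL1.IH(2) recoverable_extend[OF blindL1.prems(3)])
        (auto simp: seq_ok_iff intro: sequent_term_subterm)
    ultimately show "cfd ar ac R (insert P' \<Delta>) T'"
      using blindL1.prems(1) \<open>sequent_term ar ac R P'\<close> P'(1)
      by (intro cfd.blindL1[of ar ac R "insert P' \<Delta>" T' a b]) (auto simp: seq_ok_iff)
  qed (use blindL1.hyps(2) blindL1.prems(3) in auto)
next
  case (blindR \<Gamma> M N)
  from ac_eq_same_head[OF blindR.prems(2)] obtain M' N'
    where T': "T' = Blind M' N'" "ac_eq ac M M'" "ac_eq ac N N'"
    by auto
  have "seq_ok ar ac R \<Delta> M'" "seq_ok ar ac R \<Delta> N'"
    using blindR.prems(1) T'(1) by (auto simp: seq_ok_iff intro: sequent_term_subterm)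
  with blindR.prems(3) T'(2,3) have "cfd ar ac R \<Delta> M'" "cfd ar ac R \<Delta> N'"
    by (simp_all add: blindR.IH)
  with blindR.prems(1) show ?case
    unfolding T'(1) by (rule cfd.blindR)
next
  case (blindL2 \<Gamma> T M Q K)
  show ?case
  proof (rule cfd_recoverable_guardedE[OF _ _ blindL2.prems(1)])
    fix P' assume "ac_eq ac (Sign (Blind M Q) K) P'" "sequent_term ar ac R P'"
    then obtain x k where x: "P' = Sign x k" "ac_eq ac (Blind M Q) x" "ac_eq ac K k"
      using ac_eq_same_head by fastforce
    obtain m q where "x = Blind m q" "ac_eq ac M m" "ac_eq ac Q q"
      using ac_eq_same_head[OF x(2)] by auto
    with x have P': "P' = Sign (Blind m q) k" "ac_eq ac M m" "ac_eq ac Q q" "ac_eq ac K k"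
      by simp_all
    have "sequent_term ar ac R m" "sequent_term ar ac R k"
      using \<open>sequent_term ar ac R P'\<close> unfolding P'(1) by (auto intro: sequent_term_subterm)
    then have "sequent_term ar ac R (Sign m k)"
      using normal_Sign[OF assms(2)] unfolding sequent_term_def ground_def by simp
    have "cfd ar ac R (insert P' \<Delta>) q"
      using blindL2.prems P' \<open>sequent_term ar ac R P'\<close>
      by (intro blindL2.IH(1))
        (auto simp: seq_ok_iff intro: sequent_term_subterm recoverable_mono[OF subset_insertI])
    moreover have "cfd ar ac R (insert P' \<Delta> \<union> {Sign m k, q}) T'"
      using blindL2.prems P' \<open>sequent_term ar ac R P'\<close> \<open>sequent_term ar ac R (Sign m k)\<close>
      by (intro blindL2.IH(2) recoverable_extend[OF blindL2.prems(3)])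
        (auto simp: seq_ok_iff intro: sequent_term_subterm ac_eq.sign)
    ultimately show "cfd ar ac R (insert P' \<Delta>) T'"
      using blindL2.prems(1) \<open>sequent_term ar ac R P'\<close> P'(1)
      by (intro cfd.blindL2[of ar ac R "insert P' \<Delta>" T' m q k]) (auto simp: seq_ok_iff)
  qed (use blindL2.hyps(2) blindL2.prems(3) in auto)
next
  case (gs \<Gamma> M t A)
  have "guarded_covered ac (insert T' \<Delta>) t"
  proof (cases "t = M")
    case True
    show ?thesis
      unfolding True using ac_eq_guarded_covered[OF ac_eq.sym[OF gs.prems(2)]]
      by (rule guarded_covered_mono[rotated]) simp
  next
    case False
    then have "recoverable ar ac R \<Delta> t"
      using gs.hyps(2) gs.prems(3) by simp
    then show ?thesis
      unfolding recoverable_def by (blast intro: guarded_covered_mono[OF subset_insertI])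
  qed
  then obtain t' B where "t' \<in> insert T' \<Delta>" "B \<in> subterms t'" "guarded B" "ac_eq ac B A"
    using gs.hyps(3,4) unfolding guarded_covered_def by blast
  have "sequent_term ar ac R B"
    using gs.prems(1) \<open>t' \<in> insert T' \<Delta>\<close> \<open>B \<in> subterms t'\<close>
    by (auto simp: seq_ok_iff intro: sequent_term_subterm)
  then have "cfd ar ac R \<Delta> B"
    using gs.prems ac_eq.sym[OF \<open>ac_eq ac B A\<close>] by (intro gs.IH(1)) (auto simp: seq_ok_iff)
  moreover have "\<forall>C\<in>\<Gamma> \<union> {A}. recoverable ar ac R (insert B \<Delta>) C"
    using ac_eq.sym[OF \<open>ac_eq ac B A\<close>] by (intro recoverable_extend[OF gs.prems(3)]) auto
  then have "cfd ar ac R (insert B \<Delta>) T'"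
    using gs.prems(1,2) \<open>sequent_term ar ac R B\<close> by (intro gs.IH(2)) (auto simp: seq_ok_iff)
  ultimately show ?case
    using gs.prems(1) \<open>t' \<in> insert T' \<Delta>\<close> \<open>B \<in> subterms t'\<close> \<open>guarded B\<close>
    by (intro cfd.gs[of ar ac R \<Delta> T' t' B])
qed


lemma recoverable_normal_form:
  fixes Xs :: "('n, 'f) trm list"
  assumes "rewrite_system ar R" and "\<forall>X\<in>set Xs. normal R ac X" and "length Xs = ar f"
    and "is_nf R ac (Fn f Xs) N"
  shows "recoverable ar ac R (set Xs) N"
proof -
  obtain N0 where N0: "(step_mod R ac)\<^sup>*\<^sup>* (Fn f Xs) N0" "ac_eq ac N0 N"
    using assms(4) unfolding is_nf_def by blast
  have "guarded_covered ac (set Xs) (Fn f Xs)"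
    unfolding guarded_covered_def by (auto intro: ac_eq.refl)
  then have "guarded_covered ac (set Xs) N0"
    using guarded_covered_steps[OF N0(1) assms(1,2)] by blast
  then have "guarded_covered ac (set Xs) N"
    using ac_eq_guarded_covered[OF N0(2)] by (rule guarded_covered_trans)
  moreover have "id_derivable ar ac R (set Xs) N"
    unfolding id_derivable_def
  proof (intro exI conjI)
    let ?C = "Fn f (map V [0..<length Xs]) :: ('n, 'f) trm"
    show "is_ectx ?C" "wft ar ?C" "\<forall>x\<in>vars ?C. Xs ! x \<in> set Xs"
      using assms(3) by (auto simp: list_all_iff)
    have "eqE R ac N (Fn f Xs)"
      using steps_imp_eqE[OF N0(1)] ac_eq_imp_eqE[OF N0(2)] by (blast intro: eqE_sym eqE_trans)
    then show "eqE R ac N (subst (nth Xs) ?C)"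
      by (simp add: map_nth comp_def)
  qed
  ultimately show ?thesis
    unfolding recoverable_def by blast
qed

theorem lemma3:
  fixes ar :: "'f \<Rightarrow> nat" and ac :: "'f set" and th :: "'f \<Rightarrow> nat" and n :: nat
    and Rs :: "nat \<Rightarrow> ('n, 'f) rules" and R :: "('n, 'f) rules"
    and f :: 'f and Xs :: "('n, 'f) trm list" and N M :: "('n, 'f) trm"
    and \<Gamma> :: "('n, 'f) trm set"
  assumes "E_theory ar ac th n Rs R"
    and "\<forall>X \<in> set Xs. ground X \<and> wft ar X \<and> normal R ac X"
    and "length Xs = ar f"
    and "is_nf R ac (Fn f Xs) N"
    and "cfd ar ac R (insert N \<Gamma>) M"
  shows "cfd ar ac R (\<Gamma> \<union> set Xs) M"
proof -
  have rs: "rewrite_system ar R"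
    using assms(1) unfolding E_theory_def ac_convergent_def by blast
  have "recoverable ar ac R (\<Gamma> \<union> set Xs) N"
    using recoverable_normal_form[OF rs _ assms(3,4)] assms(2) by (blast intro: recoverable_mono)
  moreover have "\<forall>B\<in>\<Gamma>. recoverable ar ac R (\<Gamma> \<union> set Xs) B"
    by (blast intro: recoverable_ac_member ac_eq.refl)
  moreover have "seq_ok ar ac R (\<Gamma> \<union> set Xs) M"
    using cfd_seq_ok[OF assms(5)] assms(2) by (auto simp: seq_ok_iff sequent_term_def)
  ultimately show ?thesis
    using cfd_recoverable_context[OF assms(5) rs] ac_eq.refl by blast
qed

end
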